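(* Let $\lambda>0$, $M_y,M_z\ge1$, $d_y,d_z>0$, $k_z(m)=(m\bmod M_z)d_z$, $k_y(m)=\lfloor m/M_z\rfloor d_y$ for $m=0,\dots,M_yM_z-1$, and $\tilde\phi_m(\varphi,\theta,r)=k_z(m)\sin\theta+k_y(m)\sin\varphi\cos\theta-\frac{k_y(m)^2+k_z(m)^2}{2r}$. Suppose $K$ users are located at $(\varphi_o,\theta_k,r_k)$, $k=1,\dots,K$, all with the same azimuth $\varphi_o\in[-\pi/2,\pi/2]$, elevations $\theta_k\in[-\pi/2,\pi/2]$ and $r_k>0$. Let $p,q,v\in\{1,\dots,K\}$ satisfy $|\sin\theta_p-\sin\theta_q+\sin\theta_v|<1$; set $\theta_{pqv}=\arcsin(\sin\theta_p-\sin\theta_q+\sin\theta_v)$, and suppose moreover $\left|\frac{\sin\varphi_o}{\cos\theta_{pqv}}(\cos\theta_p-\cos\theta_q+\cos\theta_v)\right|\le1$ and $\frac1{r_p}-\frac1{r_q}+\frac1{r_v}>0$. Define the third-order focal point by $\varphi_{pqv}=\arcsin\left(\frac{\sin\varphi_o\cos\theta_p-\sin\varphi_o\cos\theta_q+\sin\varphi_o\cos\theta_v}{\cos\theta_{pqv}}\right)$ and $r_{pqv}=\left(\frac1{r_p}-\frac1{r_q}+\frac1{r_v}\right)^{-1}$. Then $$\theta_{pqv}=\arcsin(\sin\theta_p-\sin\theta_q+\sin\theta_v),\quad \varphi_{pqv}=\arcsin\left(\frac{\sin\varphi_o}{\cos\theta_{pqv}}(\cos\theta_p-\cos\theta_q+\cos\theta_v)\right),\quad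 r_{pqv}=\left(\frac1{r_p}-\frac1{r_q}+\frac1{r_v}\right)^{-1},$$ and $\tilde\phi_m(\varphi_o,\theta_p,r_p)-\tilde\phi_m(\varphi_o,\theta_q,r_q)+\tilde\phi_m(\varphi_o,\theta_v,r_v)=\tilde\phi_m(\varphi_{pqv},\theta_{pqv},r_{pqv})$ for all $m$; i.e., the third-order distortion is focused at these points.
   Context: Uniform planar array in the $yz$-plane transmitting $x_m[n]=\sum_k e^{-j\frac{2\pi}{\lambda}\tilde\phi_m(\varphi_k,\theta_k,r_k)}s_k[n]$ (Fresnel near-field model); the third-order distortion is the term $x_m|x_m|^2=\sum_{p,q,v}s_ps_q^*s_v\,e^{-j\frac{2\pi}{\lambda}(\tilde\phi_m(p)-\tilde\phi_m(q)+\tilde\phi_m(v))}$, and its focal points are the points whose Fresnel phase equals the alternating phase sum. The paper states the formulas as approximations of the true near-field focal points; within the Fresnel model they are exact. *)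

theory Defs
  imports Complex_Main
begin

definition kz :: "nat \<Rightarrow> real \<Rightarrow> nat \<Rightarrow> real" where
  "kz Mz dz m = real (m mod Mz) * dz"

definition ky :: "nat \<Rightarrow> real \<Rightarrow> nat \<Rightarrow> real" where
  "ky Mz dy m = real (m div Mz) * dy"

definition fresnel_phase :: "nat \<Rightarrow> real \<Rightarrow> real \<Rightarrow> nat \<Rightarrow> real \<Rightarrow> real \<Rightarrow> real \<Rightarrow> real" where
  "fresnel_phase Mz dy dz m az el r =
     kz Mz dz m * sin el + ky Mz dy m * sin az * cos el
     - ((ky Mz dy m)\<^sup>2 + (kz Mz dz m)\<^sup>2) / (2 * r)"

end

theory Submission
  imports Defs
begin

text \<open>The Fresnel phase of element m is linear in the triple
  (sin \<theta>, sin \<phi> cos \<theta>, 1/r), with coefficients that depend only on the element.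
  Hence an alternating sum of phases is again a phase, evaluated at any point whose triple
  is the alternating sum of the triples. The arcsin and inverse formulas solve for such a
  point: the elevation is recovered from its sine because the sine sum lies in (-1,1), and
  the azimuth from sin \<phi> cos \<theta> because cos \<theta>_pqv > 0.
  The positivity of r_pqv and the angular ranges only make the focal point physical;
  the identity does not need them.\<close>

lemma fresnel_phase_linear:
  "fresnel_phase Mz dy dz m az el r =
     kz Mz dz m * sin el + ky Mz dy m * (sin az * cos el)
     - ((ky Mz dy m)\<^sup>2 + (kz Mz dz m)\<^sup>2) / 2 * (1 / r)"
  unfolding fresnel_phase_def by simp

lemma fresnel_phase_alternating_sum:
  assumes "sin el = sin el\<^sub>1 - sin el\<^sub>2 + sin el\<^sub>3"
    and "sin az * cos el = sin az\<^sub>1 * cos el\<^sub>1 - sin az\<^sub>2 * cos el\<^sub>2 + sin az\<^sub>3 * cos el\<^sub>3"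
    and "1 / r = 1 / r\<^sub>1 - 1 / r\<^sub>2 + 1 / r\<^sub>3"
  shows "fresnel_phase Mz dy dz m az\<^sub>1 el\<^sub>1 r\<^sub>1 - fresnel_phase Mz dy dz m az\<^sub>2 el\<^sub>2 r\<^sub>2
           + fresnel_phase Mz dy dz m az\<^sub>3 el\<^sub>3 r\<^sub>3
         = fresnel_phase Mz dy dz m az el r"
  unfolding fresnel_phase_linear assms by (simp add: right_diff_distrib distrib_left)

lemma cos_arcsin_pos:
  assumes "\<bar>x\<bar> < 1"
  shows "cos (arcsin x) > 0"
proof -
  have "x\<^sup>2 < 1" using assms by (simp add: abs_square_less_1)
  then show ?thesis using assms by (simp add: cos_arcsin)
qed

lemma sin_arcsin_divide_mult:
  assumes "c > 0" and "\<bar>x / c\<bar> \<le> 1"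
  shows "sin (arcsin (x / c)) * c = x"
proof -
  have "-1 \<le> x / c" and "x / c \<le> 1"
    using assms(2) by (simp_all only: abs_le_iff) linarith+
  then show ?thesis using assms(1) by (simp add: sin_arcsin)
qed

theorem corollary4:
  fixes lam dy dz phio :: real
    and My Mz K p q v :: nat
    and theta r :: "nat \<Rightarrow> real"
    and theta_pqv phi_pqv r_pqv :: real
  assumes "lam > 0" and "My \<ge> 1" and "Mz \<ge> 1" and "dy > 0" and "dz > 0"
    and "phio \<in> {-pi/2..pi/2}"
    and "\<And>k. k \<in> {1..K} \<Longrightarrow> theta k \<in> {-pi/2..pi/2}"
    and "\<And>k. k \<in> {1..K} \<Longrightarrow> r k > 0"
    and "p \<in> {1..K}" and "q \<in> {1..K}" and "v \<in> {1..K}"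
    and "\<bar>sin (theta p) - sin (theta q) + sin (theta v)\<bar> < 1"
    and "theta_pqv = arcsin (sin (theta p) - sin (theta q) + sin (theta v))"
    and "\<bar>sin phio / cos theta_pqv * (cos (theta p) - cos (theta q) + cos (theta v))\<bar> \<le> 1"
    and "1 / r p - 1 / r q + 1 / r v > 0"
    and "phi_pqv = arcsin ((sin phio * cos (theta p) - sin phio * cos (theta q)
                            + sin phio * cos (theta v)) / cos theta_pqv)"
    and "r_pqv = inverse (1 / r p - 1 / r q + 1 / r v)"
  shows "theta_pqv = arcsin (sin (theta p) - sin (theta q) + sin (theta v))
       \<and> phi_pqv = arcsin (sin phio / cos theta_pqv * (cos (theta p) - cos (theta q) + cos (theta v)))
       \<and> r_pqv = inverse (1 / r p - 1 / r q + 1 / r v)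
       \<and> (\<forall>m < My * Mz.
            fresnel_phase Mz dy dz m phio (theta p) (r p)
          - fresnel_phase Mz dy dz m phio (theta q) (r q)
          + fresnel_phase Mz dy dz m phio (theta v) (r v)
          = fresnel_phase Mz dy dz m phi_pqv theta_pqv r_pqv)"
proof -
  let ?x = "sin phio * cos (theta p) - sin phio * cos (theta q) + sin phio * cos (theta v)"
  have x_over_cos: "?x / cos theta_pqv
      = sin phio / cos theta_pqv * (cos (theta p) - cos (theta q) + cos (theta v))"
    by (simp add: algebra_simps add_divide_distrib diff_divide_distrib)
  have sin_theta: "sin theta_pqv = sin (theta p) - sin (theta q) + sin (theta v)"
    using assms(12,13) by (simp add: sin_arcsin abs_less_iff)
  have cos_theta: "cos theta_pqv > 0"
    using assms(12,13) cos_arcsin_pos by blast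
  have "\<bar>?x / cos theta_pqv\<bar> \<le> 1"
    using assms(14) x_over_cos by (simp only:)
  then have sin_cos_phi: "sin phi_pqv * cos theta_pqv = ?x"
    unfolding assms(16) by (rule sin_arcsin_divide_mult[OF cos_theta])
  have inverse_r: "1 / r_pqv = 1 / r p - 1 / r q + 1 / r v"
    using assms(17) by (simp add: inverse_eq_divide)
  have "\<forall>m. fresnel_phase Mz dy dz m phio (theta p) (r p)
          - fresnel_phase Mz dy dz m phio (theta q) (r q)
          + fresnel_phase Mz dy dz m phio (theta v) (r v)
          = fresnel_phase Mz dy dz m phi_pqv theta_pqv r_pqv"
    using sin_theta sin_cos_phi inverse_r by (blast intro: fresnel_phase_alternating_sum)
  moreover have "phi_pqv
      = arcsin (sin phio / cos theta_pqv * (cos (theta p) - cos (theta q) + cos (theta v)))"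
    using assms(16) x_over_cos by (simp only:)
  ultimately show ?thesis
    using assms(13,17) by blast
qed

end
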